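(* Let $(P,\mathcal{B})$ be a nontrivial pairwise balanced design with $n\ge 3$ points. Then \[\sum_{B\in\mathcal{B}}|B|\ \ge\ 3n-3,\] and equality holds if and only if $(P,\mathcal{B})$ is a near-pencil.
   Context: A pairwise balanced design (PBD) is a pair $(P,\mathcal{B})$ where $P$ is a finite set of points and $\mathcal{B}$ is a family of subsets of $P$ (blocks), each of size at least $2$, such that every two distinct points of $P$ lie in exactly one block. It is nontrivial if $P\notin\mathcal{B}$. A PBD on $n$ points is a near-pencil if it has one block of size $n-1$ and all other blocks have size $2$. *)

theory Defs
  imports Main
begin

definition pbd :: "'a set \<Rightarrow> 'a set set \<Rightarrow> bool" where
  "pbd P B \<longleftrightarrow> finite P \<and> (\<forall>b\<in>B. b \<subseteq> P \<and> card b \<ge> 2) \<and>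
     (\<forall>x\<in>P. \<forall>y\<in>P. x \<noteq> y \<longrightarrow> (\<exists>!b. b \<in> B \<and> x \<in> b \<and> y \<in> b))"

definition nontrivial_pbd :: "'a set \<Rightarrow> 'a set set \<Rightarrow> bool" where
  "nontrivial_pbd P B \<longleftrightarrow> pbd P B \<and> P \<notin> B"

definition near_pencil :: "'a set \<Rightarrow> 'a set set \<Rightarrow> bool" where
  "near_pencil P B \<longleftrightarrow> pbd P B \<and>
     (\<exists>b0\<in>B. card b0 = card P - 1 \<and> (\<forall>b\<in>B. b \<noteq> b0 \<longrightarrow> card b = 2))"

end

theory Submission
  imports Defs
begin

text \<open>Double counting gives \<open>\<Sum>\<^sub>b |b| = \<Sum>\<^sub>x r\<^sub>x\<close>, where \<open>r\<^sub>x\<close> is the number of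
  blocks through \<open>x\<close>, and \<open>r\<^sub>x \<ge> |b|\<close> for every block \<open>b\<close> missing \<open>x\<close>.
  If some block has \<open>n - 1\<close> points, every other block must join the remaining point to one
  point of it: this is a near-pencil, with sum \<open>3n - 3\<close>. Otherwise a largest block has
  \<open>k \<le> n - 2\<close> points. For \<open>k = 2\<close> all \<open>r\<^sub>x = n - 1\<close> and the sum is \<open>n(n - 1) \<ge> 3n - 2\<close>.
  For \<open>k \<ge> 3\<close>, points off the block have \<open>r\<^sub>x \<ge> k\<close>; a block \<open>c\<close> through two of them meets
  it in at most one point, and all other points of the block have \<open>r\<^sub>x \<ge> 3\<close>, so the sum is at
  least \<open>3n - 1\<close>.\<close>

lemma pbd_finite: "pbd P B \<Longrightarrow> finite P"
  by (simp add: pbd_def)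

lemma pbd_block_subset: "pbd P B \<Longrightarrow> b \<in> B \<Longrightarrow> b \<subseteq> P"
  by (simp add: pbd_def)

lemma pbd_block_card_ge_2: "pbd P B \<Longrightarrow> b \<in> B \<Longrightarrow> 2 \<le> card b"
  by (simp add: pbd_def)

lemma pbd_finite_block: "pbd P B \<Longrightarrow> b \<in> B \<Longrightarrow> finite b"
  using pbd_finite pbd_block_subset finite_subset by metis

lemma pbd_finite_blocks: "pbd P B \<Longrightarrow> finite B"
  using pbd_finite pbd_block_subset by (metis Pow_iff finite_Pow_iff finite_subset subsetI)

lemma pbd_ex_block:
  "pbd P B \<Longrightarrow> x \<in> P \<Longrightarrow> y \<in> P \<Longrightarrow> x \<noteq> y \<Longrightarrow> \<exists>b\<in>B. x \<in> b \<and> y \<in> b"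
  unfolding pbd_def by blast

lemma pbd_block_eq:
  assumes "pbd P B" "b \<in> B" "c \<in> B" "x \<in> b" "y \<in> b" "x \<in> c" "y \<in> c" "x \<noteq> y"
  shows "b = c"
  using assms pbd_block_subset[OF assms(1,2)] unfolding pbd_def by blast

lemma pbd_card_Int_blocks_le_1:
  assumes "pbd P B" "b \<in> B" "c \<in> B" "b \<noteq> c"
  shows "card (b \<inter> c) \<le> 1"
  using pbd_finite_block[OF assms(1,2)] pbd_block_eq[OF assms(1-3)] assms(4)
  by (subst One_nat_def, subst card_le_Suc0_iff_eq) auto

lemma two_elements_of_card_ge_2:
  assumes "2 \<le> card X"
  obtains u v where "u \<in> X" "v \<in> X" "u \<noteq> v"
  using assms by (metis card_le_Suc0_iff_eq not_less_eq_eq numeral_2_eq_2 card.infinite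
      le_zero_eq zero_neq_numeral)

definition replication :: "'a set set \<Rightarrow> 'a \<Rightarrow> nat" where
  "replication B x = card {b \<in> B. x \<in> b}"

lemma sum_card_blocks_eq_sum_replication:
  assumes "finite P" "finite B" "\<And>b. b \<in> B \<Longrightarrow> b \<subseteq> P"
  shows "(\<Sum>b\<in>B. card b) = (\<Sum>x\<in>P. replication B x)"
  unfolding replication_def
  by (rule sum_multicount_gen[symmetric]) (use assms in \<open>auto intro: arg_cong[where f = card]\<close>)

lemma card_block_le_replication:
  assumes "pbd P B" "b \<in> B" "x \<in> P" "x \<notin> b"
  shows "card b \<le> replication B x"
proof -
  have "\<forall>y\<in>b. \<exists>c. c \<in> B \<and> x \<in> c \<and> y \<in> c"
    using pbd_ex_block[OF assms(1,3)] pbd_block_subset[OF assms(1,2)] assms(4) by blast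
  then obtain f where f: "\<And>y. y \<in> b \<Longrightarrow> f y \<in> B \<and> x \<in> f y \<and> y \<in> f y"
    by metis
  \<comment> \<open>Two points of b on one block through x would force that block to be b.\<close>
  have "inj_on f b"
    by (rule inj_onI) (metis assms(2,4) f pbd_block_eq[OF assms(1)])
  moreover have "f ` b \<subseteq> {c \<in> B. x \<in> c}" using f by blast
  moreover have "finite {c \<in> B. x \<in> c}" using pbd_finite_blocks[OF assms(1)] by simp
  ultimately show ?thesis unfolding replication_def by (metis card_inj_on_le)
qed

lemma card_points_le_replication:
  assumes "pbd P B" "x \<in> P" "\<And>b. b \<in> B \<Longrightarrow> card b \<le> k"
  shows "card P - 1 \<le> (k - 1) * replication B x"
proof -
  let ?Bx = "{b \<in> B. x \<in> b}"
  have "P - {x} \<subseteq> (\<Union>b\<in>?Bx. b - {x})"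
    using pbd_ex_block[OF assms(1,2)] by blast
  then have "card (P - {x}) \<le> card (\<Union>b\<in>?Bx. b - {x})"
    using pbd_finite[OF assms(1)] pbd_block_subset[OF assms(1)]
    by (intro card_mono) (auto intro: finite_subset)
  also have "\<dots> \<le> (\<Sum>b\<in>?Bx. card (b - {x}))"
    using pbd_finite_blocks[OF assms(1)] by (intro card_UN_le) simp
  also have "\<dots> \<le> (\<Sum>b\<in>?Bx. k - 1)"
    using assms(3) by (intro sum_mono) (simp add: diff_le_mono)
  finally show ?thesis
    using assms(2) unfolding replication_def by (simp add: mult.commute)
qed

lemma replication_ge_2:
  assumes "nontrivial_pbd P B" "x \<in> P" "2 \<le> card P"
  shows "2 \<le> replication B x"
proof -
  have pbd: "pbd P B" and "P \<notin> B" using assms(1) by (simp_all add: nontrivial_pbd_def)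
  obtain y where "y \<in> P" "y \<noteq> x"
    using assms(2,3) by (metis two_elements_of_card_ge_2)
  then obtain c where c: "c \<in> B" "x \<in> c" "y \<in> c" using pbd_ex_block[OF pbd assms(2)] by metis
  obtain z where z: "z \<in> P" "z \<notin> c"
    using pbd_block_subset[OF pbd c(1)] \<open>P \<notin> B\<close> c(1) by (metis subset_antisym subsetI)
  then obtain d where d: "d \<in> B" "x \<in> d" "z \<in> d"
    using pbd_ex_block[OF pbd assms(2)] c(2) by metis
  have "card {c, d} \<le> replication B x"
    unfolding replication_def using c d pbd_finite_blocks[OF pbd] by (intro card_mono) auto
  with c d z show ?thesis by (metis card_2_iff)
qed

lemma replication_ge_3:
  assumes "pbd P B" "b \<in> B" "c \<in> B" "x \<in> b" "x \<notin> c"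
    and "q \<in> c" "y \<in> c" "q \<noteq> y" "q \<notin> b" "y \<notin> b"
  shows "3 \<le> replication B x"
proof -
  have "x \<in> P" "q \<in> P" "y \<in> P"
    using assms pbd_block_subset[OF assms(1)] by blast+
  obtain d where d: "d \<in> B" "x \<in> d" "q \<in> d"
    using pbd_ex_block[OF assms(1) \<open>x \<in> P\<close> \<open>q \<in> P\<close>] assms(6,5) by metis
  obtain e where e: "e \<in> B" "x \<in> e" "y \<in> e"
    using pbd_ex_block[OF assms(1) \<open>x \<in> P\<close> \<open>y \<in> P\<close>] assms(7,5) by metis
  \<comment> \<open>c is the only block through q and y, and it misses x.\<close>
  have "q \<notin> e" using pbd_block_eq[OF assms(1) e(1) assms(3), of q y] e assms by blast
  have "card {b, d, e} \<le> replication B x"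
    unfolding replication_def using assms(2,4) d e pbd_finite_blocks[OF assms(1)]
    by (intro card_mono) auto
  moreover have "b \<noteq> d" "b \<noteq> e" "d \<noteq> e"
    using d e assms \<open>q \<notin> e\<close> by auto
  then have "card {b, d, e} = 3" by simp
  ultimately show ?thesis by simp
qed

lemma pbd_other_block_is_pair:
  assumes "pbd P B" "b1 \<in> B" "P - b1 = {q}" "b \<in> B" "b \<noteq> b1"
  shows "\<exists>x\<in>b1. b = {q, x}"
proof -
  have outside: "y = q" if "y \<in> P" "y \<notin> b1" for y
    using that assms(3) by blast
  have "q \<in> b"
  proof (rule ccontr)
    assume "q \<notin> b"
    then have "b \<subseteq> b1" using pbd_block_subset[OF assms(1,4)] outside by blast
    obtain u v where "u \<in> b" "v \<in> b" "u \<noteq> v"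
      using pbd_block_card_ge_2[OF assms(1,4)] by (rule two_elements_of_card_ge_2)
    then show False
      using pbd_block_eq[OF assms(1,4,2)] \<open>b \<subseteq> b1\<close> assms(5) by blast
  qed
  have sub: "b - {q} \<subseteq> b \<inter> b1" using pbd_block_subset[OF assms(1,4)] outside by blast
  have "card (b - {q}) \<le> card (b \<inter> b1)"
    using pbd_finite_block[OF assms(1,4)] sub by (intro card_mono) auto
  also have "\<dots> \<le> 1" using pbd_card_Int_blocks_le_1[OF assms(1,4,2,5)] .
  finally have "card (b - {q}) \<le> 1" .
  moreover have "2 \<le> card b" using pbd_block_card_ge_2[OF assms(1,4)] .
  ultimately have "card (b - {q}) = 1" using \<open>q \<in> b\<close> by simp
  then obtain x where x: "b - {q} = {x}" by (auto simp: card_1_singleton_iff)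
  then have "x \<in> b1" using sub by blast
  moreover have "b = {q, x}" using x \<open>q \<in> b\<close> by blast
  ultimately show ?thesis by blast
qed

lemma pbd_long_block_near_pencil:
  assumes "pbd P B" "b1 \<in> B" "card b1 = card P - 1"
  shows "near_pencil P B \<and> (\<Sum>b\<in>B. card b) = 3 * card P - 3"
proof -
  have fin: "finite b1" using pbd_finite_block[OF assms(1,2)] .
  have "card (P - b1) = 1"
    using card_Diff_subset[OF fin pbd_block_subset[OF assms(1,2)]] assms(3)
      pbd_block_card_ge_2[OF assms(1,2)] by simp
  then obtain q where q: "P - b1 = {q}" by (auto simp: card_1_singleton_iff)
  then have "q \<in> P" "q \<notin> b1" by auto
  have pair_card: "card {q, x} = 2" if "x \<in> b1" for x
    using that \<open>q \<notin> b1\<close> by (cases "x = q") auto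
  have others: "B - {b1} = (\<lambda>x. {q, x}) ` b1"
  proof
    show "B - {b1} \<subseteq> (\<lambda>x. {q, x}) ` b1"
      using pbd_other_block_is_pair[OF assms(1,2) q] by blast
    show "(\<lambda>x. {q, x}) ` b1 \<subseteq> B - {b1}"
    proof clarify
      fix x assume "x \<in> b1"
      then have "x \<in> P" "x \<noteq> q" using pbd_block_subset[OF assms(1,2)] \<open>q \<notin> b1\<close> by auto
      then obtain c where c: "c \<in> B" "q \<in> c" "x \<in> c"
        using pbd_ex_block[OF assms(1) \<open>q \<in> P\<close> \<open>x \<in> P\<close>] by blast
      have "c \<noteq> b1" using c(2) \<open>q \<notin> b1\<close> by blast
      then obtain x' where "c = {q, x'}"
        using pbd_other_block_is_pair[OF assms(1,2) q c(1)] by blast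
      then have "c = {q, x}" using c(3) \<open>x \<noteq> q\<close> by blast
      then show "{q, x} \<in> B - {b1}" using c(1) \<open>c \<noteq> b1\<close> by simp
    qed
  qed
  have card_others: "\<forall>b\<in>B. b \<noteq> b1 \<longrightarrow> card b = 2"
  proof (intro ballI impI)
    fix b assume "b \<in> B" "b \<noteq> b1"
    then obtain x where "x \<in> b1" "b = {q, x}" using others by blast
    then show "card b = 2" using pair_card by simp
  qed
  have inj: "inj_on (\<lambda>x. {q, x}) b1"
  proof (rule inj_onI)
    fix x y assume "x \<in> b1" "y \<in> b1" "{q, x} = {q, y}"
    then show "x = y" using \<open>q \<notin> b1\<close> by (metis insertE insertI2 singletonD singletonI)
  qed
  have "(\<Sum>b\<in>B. card b) = card b1 + (\<Sum>b\<in>B - {b1}. card b)"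
    using sum.remove[OF pbd_finite_blocks[OF assms(1)] assms(2)] .
  also have "(\<Sum>b\<in>B - {b1}. card b) = (\<Sum>x\<in>b1. card {q, x})"
    unfolding others by (rule sum.reindex[OF inj, unfolded comp_def])
  also have "\<dots> = 2 * card b1" using pair_card by simp
  finally have "(\<Sum>b\<in>B. card b) = 3 * card P - 3" using assms(3) by simp
  with card_others assms show ?thesis unfolding near_pencil_def by blast
qed

lemma nontrivial_pbd_large_block_sum_ge:
  assumes "nontrivial_pbd P B" "b0 \<in> B" "3 \<le> card b0" "card b0 + 2 \<le> card P"
  shows "3 * card P - 1 \<le> (\<Sum>b\<in>B. card b)"
proof -
  have pbd: "pbd P B" using assms(1) by (simp add: nontrivial_pbd_def)
  have fin_P: "finite P" and fin_b0: "finite b0" and b0_sub: "b0 \<subseteq> P"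
    using pbd_finite[OF pbd] pbd_finite_block[OF pbd assms(2)] pbd_block_subset[OF pbd assms(2)] .
  have card_out: "card (P - b0) = card P - card b0" using card_Diff_subset[OF fin_b0 b0_sub] .
  then obtain q y where qy: "q \<in> P - b0" "y \<in> P - b0" "q \<noteq> y"
    using assms(4) by (metis two_elements_of_card_ge_2 le_diff_conv2 add.commute le_add2 le_trans
        add_leD2)
  then obtain c where c: "c \<in> B" "q \<in> c" "y \<in> c" using pbd_ex_block[OF pbd] by blast
  have "c \<noteq> b0" using c(2) qy(1) by blast
  \<comment> \<open>Outside b0 the bound is card b0; inside, every point off c sees b0 and the
     two distinct blocks joining it to q and y.\<close>
  have out: "card b0 \<le> replication B x" if "x \<in> P - b0" for x
    using card_block_le_replication[OF pbd assms(2)] that by blast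
  have in_off_c: "3 \<le> replication B x" if "x \<in> b0 - c" for x
    using replication_ge_3[OF pbd assms(2) c(1), of x q y] that c qy by blast
  have in_on_c: "2 \<le> replication B x" if "x \<in> b0 \<inter> c" for x
    using replication_ge_2[OF assms(1)] that b0_sub assms(3,4) by auto
  have "(\<Sum>b\<in>B. card b) = (\<Sum>x\<in>P. replication B x)"
    using sum_card_blocks_eq_sum_replication[OF fin_P pbd_finite_blocks[OF pbd]]
      pbd_block_subset[OF pbd] by blast
  also have "\<dots> = (\<Sum>x\<in>P - b0. replication B x) + (\<Sum>x\<in>b0 - c. replication B x)
      + (\<Sum>x\<in>b0 \<inter> c. replication B x)"
    using sum.subset_diff[OF b0_sub fin_P, of "replication B"]
      sum.subset_diff[of "b0 \<inter> c" b0 "replication B"] fin_b0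
    by (simp add: Diff_Int add.assoc)
  finally have sum_split: "(\<Sum>b\<in>B. card b) = \<dots>" .
  have "card (P - b0) * card b0 \<le> (\<Sum>x\<in>P - b0. replication B x)"
    using sum_bounded_below[of "P - b0" "card b0" "replication B"] out by simp
  moreover have "card (b0 - c) * 3 \<le> (\<Sum>x\<in>b0 - c. replication B x)"
    using sum_bounded_below[of "b0 - c" 3 "replication B"] in_off_c by simp
  moreover have "card (b0 \<inter> c) * 2 \<le> (\<Sum>x\<in>b0 \<inter> c. replication B x)"
    using sum_bounded_below[of "b0 \<inter> c" 2 "replication B"] in_on_c by simp
  moreover have "card (b0 - c) + card (b0 \<inter> c) = card b0"
    using card_Int_Diff[OF fin_b0, of c] by simp
  moreover have "card (b0 \<inter> c) \<le> 1"
    using pbd_card_Int_blocks_le_1[OF pbd assms(2) c(1)] \<open>c \<noteq> b0\<close> by simp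
  moreover have "card (P - b0) * 3 \<le> card (P - b0) * card b0" using assms(3) by simp
  ultimately show ?thesis using sum_split card_out assms(4) by linarith
qed

lemma pbd_pair_blocks_sum_ge:
  assumes "pbd P B" "\<And>b. b \<in> B \<Longrightarrow> card b \<le> 2"
  shows "card P * (card P - 1) \<le> (\<Sum>b\<in>B. card b)"
proof -
  have "card P - 1 \<le> replication B x" if "x \<in> P" for x
    using card_points_le_replication[OF assms(1) that assms(2)] by simp
  then have "card P * (card P - 1) \<le> (\<Sum>x\<in>P. replication B x)"
    using sum_bounded_below[of P "card P - 1" "replication B"] by simp
  also have "\<dots> = (\<Sum>b\<in>B. card b)"
    using sum_card_blocks_eq_sum_replication[OF pbd_finite[OF assms(1)]
        pbd_finite_blocks[OF assms(1)] pbd_block_subset[OF assms(1)]] by simp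
  finally show ?thesis .
qed

lemma nontrivial_pbd_sum_ge_without_long_block:
  assumes "nontrivial_pbd P B" "3 \<le> card P" "\<And>b. b \<in> B \<Longrightarrow> card b \<noteq> card P - 1"
  shows "3 * card P - 2 \<le> (\<Sum>b\<in>B. card b)"
proof -
  have pbd: "pbd P B" and "P \<notin> B" using assms(1) by (simp_all add: nontrivial_pbd_def)
  have "B \<noteq> {}"
  proof -
    have "2 \<le> card P" using assms(2) by simp
    then obtain u v where "u \<in> P" "v \<in> P" "u \<noteq> v" by (rule two_elements_of_card_ge_2)
    then show ?thesis using pbd_ex_block[OF pbd] by blast
  qed
  define k where "k = Max (card ` B)"
  have "k \<in> card ` B"
    unfolding k_def using pbd_finite_blocks[OF pbd] \<open>B \<noteq> {}\<close> by (intro Max_in) auto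
  then obtain b0 where b0: "b0 \<in> B" "card b0 = k" by auto
  have k_max: "card b \<le> k" if "b \<in> B" for b
    using Max_ge[of "card ` B"] pbd_finite_blocks[OF pbd] that unfolding k_def by simp
  have "b0 \<subset> P" using pbd_block_subset[OF pbd b0(1)] \<open>P \<notin> B\<close> b0(1) by blast
  then have "k < card P" using psubset_card_mono[OF pbd_finite[OF pbd]] b0(2) by blast
  with assms(3)[OF b0(1)] b0(2) have k_small: "k + 2 \<le> card P" by linarith
  show ?thesis
  proof (cases "k \<le> 2")
    case True
    have n4: "4 \<le> card P"
      using k_small pbd_block_card_ge_2[OF pbd b0(1)] b0(2) by simp
    have "card P * (card P - 1) \<le> (\<Sum>b\<in>B. card b)"
      using pbd_pair_blocks_sum_ge[OF pbd] k_max True by (meson le_trans)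
    moreover have "4 * (card P - 1) \<le> card P * (card P - 1)"
      using n4 by (rule mult_le_mono1)
    ultimately show ?thesis using n4 by linarith
  next
    case False
    then show ?thesis
      using nontrivial_pbd_large_block_sum_ge[OF assms(1) b0(1)] b0(2) k_small by simp
  qed
qed

theorem mainTheorem1:
  fixes P :: "'a set" and B :: "'a set set"
  assumes "nontrivial_pbd P B" and "card P \<ge> 3"
  shows "(\<Sum>b\<in>B. card b) \<ge> 3 * card P - 3
         \<and> ((\<Sum>b\<in>B. card b) = 3 * card P - 3 \<longleftrightarrow> near_pencil P B)"
proof (cases "\<exists>b1\<in>B. card b1 = card P - 1")
  case True
  then obtain b1 where "b1 \<in> B" "card b1 = card P - 1" by blast
  moreover have "pbd P B" using assms(1) by (simp add: nontrivial_pbd_def)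
  ultimately have "near_pencil P B" "(\<Sum>b\<in>B. card b) = 3 * card P - 3"
    using pbd_long_block_near_pencil by blast+
  then show ?thesis by simp
next
  case False
  then have "\<not> near_pencil P B" unfolding near_pencil_def by blast
  moreover have "3 * card P - 2 \<le> (\<Sum>b\<in>B. card b)"
    using nontrivial_pbd_sum_ge_without_long_block[OF assms] False by blast
  ultimately show ?thesis using assms(2) by linarith
qed

end
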